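(* Let $Q$ be a rational function with distinct poles $z_1,\dotsc,z_d$ ($d\ge1$) of orders $r_1,\dotsc,r_d$. Put $P=\prod_{i=1}^d(z-z_i)^{r_i}$ and $P_0=\prod_{i=1}^d(z-z_i)$, and for each $n\ge1$ write $Q^{(n)}=\frac{\alpha_nR_n}{PP_0^n}$ with $\alpha_n\in\mathbb{C}$ and $R_n\in\mathbb{C}[z]$ monic. Then $\frac{\log|n!/\alpha_n|}{n}\to0$ as $n\to\infty$. *)

theory Defs
  imports "HOL-Analysis.Analysis" "HOL-Computational_Algebra.Polynomial"
begin

text \<open>A rational function Q = N / D with N, D coprime complex polynomials, D nonzero.
  Its poles are the roots of D; the order of the pole z is the multiplicity of z as a root of D.\<close>

definition rat_fun :: "complex poly \<Rightarrow> complex poly \<Rightarrow> complex \<Rightarrow> complex" where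
  "rat_fun N D = (\<lambda>z. poly N z / poly D z)"

definition poles :: "complex poly \<Rightarrow> complex set" where
  "poles D = {z. poly D z = 0}"

definition pole_poly :: "complex poly \<Rightarrow> complex poly" where
  "pole_poly D = (\<Prod>z\<in>poles D. [:-z, 1:] ^ order z D)"

definition pole_poly0 :: "complex poly \<Rightarrow> complex poly" where
  "pole_poly0 D = (\<Prod>z\<in>poles D. [:-z, 1:])"

end

theory Submission
  imports Defs "HOL-Real_Asymp.Real_Asymp"
begin

text \<open>
  The n-th derivative of N/D is A_n / D^(n+1) with A_0 = N and
  A_(n+1) = A_n' D - (n+1) A_n D'. Comparing leading coefficients with the normal form
  gives alpha_n lc(D)^(n+1) = lc(A_n), since P and P_0 are monic.
  With d = deg D \<ge> 1, each step raises deg A_n by at most d - 1, so eventually the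
  defect m = (n+1) d - deg A_n is positive. From then on the coefficient of degree
  deg A_n + d - 1 in A_(n+1) is -m lc(A_n) lc(D) \<noteq> 0 and the defect grows by one,
  so |alpha_(n0+j)| = K m (m+1) ... (m+j-1), which differs from (n0+j)! only by a factor
  polynomial in j. If instead A_n0 = 0, then alpha vanishes from n0 on and the sequence
  is eventually 0 because ln 0 = 0.
\<close>

subsection \<open>Numerators of the derivatives of a rational function\<close>

primrec deriv_numerator :: "'a::idom poly \<Rightarrow> 'a poly \<Rightarrow> nat \<Rightarrow> 'a poly" where
  "deriv_numerator N D 0 = N"
| "deriv_numerator N D (Suc n) =
     pderiv (deriv_numerator N D n) * D - smult (of_nat (Suc n)) (deriv_numerator N D n * pderiv D)"

lemma higher_deriv_rat_fun:
  assumes "poly D z \<noteq> 0"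
  shows "(deriv ^^ n) (rat_fun N D) z = poly (deriv_numerator N D n) z / poly D z ^ Suc n"
  using assms
proof (induction n arbitrary: z)
  case 0
  then show ?case by (simp add: rat_fun_def)
next
  case (Suc n)
  let ?A = "deriv_numerator N D n"
  let ?g = "\<lambda>w. poly ?A w / poly D w ^ Suc n"
  have "open {w. poly D w \<noteq> 0}"
    by (rule open_Collect_neq) (auto intro: continuous_intros)
  then have "\<forall>\<^sub>F w in nhds z. (deriv ^^ n) (rat_fun N D) w = ?g w"
    using Suc by (auto elim!: eventually_mono[OF eventually_nhds_in_open])
  then have "(deriv ^^ Suc n) (rat_fun N D) z = deriv ?g z"
    by (simp add: deriv_cong_ev)
  also have "\<dots> = (poly (pderiv ?A) z * poly D z ^ Suc n
      - poly ?A z * ((1 + of_nat n) * (poly (pderiv D) z * poly D z ^ n)))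
      / (poly D z ^ Suc n * poly D z ^ Suc n)"
    using Suc.prems by (intro DERIV_imp_deriv DERIV_divide poly_DERIV DERIV_power_Suc) auto
  also have "\<dots> = poly (deriv_numerator N D (Suc n)) z / poly D z ^ Suc (Suc n)"
    using Suc.prems by (simp add: field_simps)
  finally show ?case .
qed

lemma coeff_mult_degree_le:
  fixes p q :: "'a::comm_semiring_1 poly"
  assumes "degree p \<le> i" "degree q \<le> j"
  shows "coeff (p * q) (i + j) = coeff p i * coeff q j"
proof -
  have "coeff (p * q) (i + j) = (\<Sum>k\<le>i+j. coeff p k * coeff q (i + j - k))"
    by (simp add: coeff_mult)
  also have "\<dots> = (\<Sum>k\<in>{i}. coeff p k * coeff q (i + j - k))"
  proof (rule sum.mono_neutral_right)
    show "\<forall>k\<in>{..i + j} - {i}. coeff p k * coeff q (i + j - k) = 0"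
    proof
      fix k assume k: "k \<in> {..i + j} - {i}"
      show "coeff p k * coeff q (i + j - k) = 0"
      proof (cases "k < i")
        case True
        with assms have "coeff q (i + j - k) = 0" by (intro coeff_eq_0) auto
        then show ?thesis by simp
      next
        case False
        with assms k have "coeff p k = 0" by (intro coeff_eq_0) auto
        then show ?thesis by simp
      qed
    qed
  qed auto
  finally show ?thesis by simp
qed

lemma degree_deriv_numerator_Suc_le:
  fixes N D :: "'a::{idom,ring_char_0} poly"
  assumes "degree D \<ge> 1"
  shows "degree (deriv_numerator N D (Suc n)) \<le> degree (deriv_numerator N D n) + degree D - 1"
proof -
  let ?A = "deriv_numerator N D n"
  have "degree (pderiv ?A * D) \<le> degree ?A + degree D - 1"
  proof (cases "degree ?A = 0")
    case True
    then have "pderiv ?A = 0" by (simp add: pderiv_eq_0_iff)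
    then show ?thesis by simp
  next
    case False
    then show ?thesis
      using degree_mult_le[of "pderiv ?A" D] by (simp add: degree_pderiv)
  qed
  moreover have "degree (smult (of_nat (Suc n)) (?A * pderiv D)) \<le> degree ?A + degree D - 1"
    using degree_smult_le[of "of_nat (Suc n)" "?A * pderiv D"] degree_mult_le[of ?A "pderiv D"]
      assms by (simp add: degree_pderiv)
  ultimately show ?thesis
    by (simp add: degree_diff_le)
qed

lemma degree_deriv_numerator_le:
  fixes N D :: "'a::{idom,ring_char_0} poly"
  assumes "degree D \<ge> 1"
  shows "degree (deriv_numerator N D n) + n \<le> degree N + n * degree D"
proof (induction n)
  case (Suc n)
  then show ?case using degree_deriv_numerator_Suc_le[OF assms, of N n] assms by simp
qed simp

lemma coeff_deriv_numerator_Suc: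
  fixes N D :: "'a::{idom,ring_char_0} poly"
  assumes "degree D \<ge> 1"
  shows "coeff (deriv_numerator N D (Suc n)) (degree (deriv_numerator N D n) + degree D - 1)
     = lead_coeff (deriv_numerator N D n) * lead_coeff D
       * (of_nat (degree (deriv_numerator N D n)) - of_nat (Suc n) * of_nat (degree D))"
proof -
  define A where "A = deriv_numerator N D n"
  let ?a = "degree A" and ?d = "degree D"
  have "coeff (pderiv A * D) (?a + ?d - 1) = of_nat ?a * lead_coeff A * lead_coeff D"
  proof (cases "?a = 0")
    case True
    then have "pderiv A = 0" by (simp add: pderiv_eq_0_iff)
    with True show ?thesis by simp
  next
    case False
    then have "coeff (pderiv A * D) ((?a - 1) + ?d) = coeff (pderiv A) (?a - 1) * coeff D ?d"
      by (intro coeff_mult_degree_le) (auto simp: degree_pderiv)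
    with False show ?thesis by (simp add: coeff_pderiv)
  qed
  moreover have "coeff (A * pderiv D) (?a + ?d - 1) = lead_coeff A * (of_nat ?d * lead_coeff D)"
  proof -
    have "coeff (A * pderiv D) (?a + (?d - 1)) = coeff A ?a * coeff (pderiv D) (?d - 1)"
      by (intro coeff_mult_degree_le) (auto simp: degree_pderiv)
    with assms show ?thesis by (simp add: coeff_pderiv)
  qed
  ultimately show ?thesis
    by (simp add: A_def[symmetric] algebra_simps)
qed

lemma deriv_numerator_Suc_lead:
  fixes N D :: "'a::{idom,ring_char_0} poly"
  assumes d: "degree D \<ge> 1" and nz: "deriv_numerator N D n \<noteq> 0"
    and m: "degree (deriv_numerator N D n) + m = Suc n * degree D" "m \<ge> 1"
  shows "degree (deriv_numerator N D (Suc n)) + Suc m = Suc (Suc n) * degree D"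
    and "lead_coeff (deriv_numerator N D (Suc n))
           = - of_nat m * lead_coeff (deriv_numerator N D n) * lead_coeff D"
proof -
  let ?A = "deriv_numerator N D n" and ?B = "deriv_numerator N D (Suc n)"
  have "(of_nat (degree ?A) - of_nat (Suc n) * of_nat (degree D) :: 'a) = - of_nat m"
    using arg_cong[OF m(1), of "of_nat :: nat \<Rightarrow> 'a"] by (simp add: algebra_simps)
  then have c: "coeff ?B (degree ?A + degree D - 1) = - of_nat m * lead_coeff ?A * lead_coeff D"
    using coeff_deriv_numerator_Suc[OF d, of N n] by simp
  moreover have "lead_coeff D \<noteq> 0" using d by auto
  ultimately have "coeff ?B (degree ?A + degree D - 1) \<noteq> 0"
    using nz m(2) by simp
  then have deg: "degree ?B = degree ?A + degree D - 1"
    using le_degree degree_deriv_numerator_Suc_le[OF d, of N n] by (meson antisym)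
  with d m(1) show "degree ?B + Suc m = Suc (Suc n) * degree D"
    by simp
  from deg c show "lead_coeff ?B = - of_nat m * lead_coeff ?A * lead_coeff D"
    by simp
qed

lemma deriv_numerator_tail:
  fixes N D :: "'a::{idom,ring_char_0} poly"
  assumes d: "degree D \<ge> 1" and nz: "deriv_numerator N D n \<noteq> 0"
    and m: "degree (deriv_numerator N D n) + m = Suc n * degree D" "m \<ge> 1"
  shows "degree (deriv_numerator N D (n + j)) + (m + j) = Suc (n + j) * degree D \<and>
         lead_coeff (deriv_numerator N D (n + j))
           = (-1) ^ j * of_nat (pochhammer m j) * lead_coeff (deriv_numerator N D n) * lead_coeff D ^ j"
proof (induction j)
  case 0
  then show ?case using m(1) by simp
next
  case (Suc j)
  let ?A = "deriv_numerator N D (n + j)"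
  from Suc.IH have deg: "degree ?A + (m + j) = Suc (n + j) * degree D"
    and lc: "lead_coeff ?A
      = (-1) ^ j * of_nat (pochhammer m j) * lead_coeff (deriv_numerator N D n) * lead_coeff D ^ j"
    by blast+
  have "pochhammer m j \<noteq> 0" "lead_coeff D \<noteq> 0"
    using pochhammer_pos[of m j] m(2) d by auto
  with lc nz have "?A \<noteq> 0"
    by auto
  from deriv_numerator_Suc_lead[OF d this deg] m(2) lc show ?case
    by (simp del: deriv_numerator.simps add: pochhammer_rec' algebra_simps)
qed

subsection \<open>The normalising constants\<close>

lemma poly_eq_on_infinite:
  fixes p q :: "'a::idom poly"
  assumes "infinite S" "\<And>z. z \<in> S \<Longrightarrow> poly p z = poly q z"
  shows "p = q"
proof (rule ccontr)
  assume "p \<noteq> q"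
  then have "finite {z. poly (p - q) z = 0}"
    by (intro poly_roots_finite) simp
  moreover have "S \<subseteq> {z. poly (p - q) z = 0}"
    using assms(2) by auto
  ultimately show False
    using assms(1) finite_subset by blast
qed

lemma poly_pole_poly_nonzero: "z \<notin> poles D \<Longrightarrow> poly (pole_poly D) z \<noteq> 0"
  unfolding pole_poly_def by (cases "finite (poles D)") (auto simp: poly_prod prod_zero_iff)

lemma poly_pole_poly0_nonzero: "z \<notin> poles D \<Longrightarrow> poly (pole_poly0 D) z \<noteq> 0"
  unfolding pole_poly0_def by (cases "finite (poles D)") (auto simp: poly_prod prod_zero_iff)

lemma lead_coeff_pole_poly: "lead_coeff (pole_poly D) = 1"
  unfolding pole_poly_def by (simp add: lead_coeff_prod lead_coeff_power)

lemma lead_coeff_pole_poly0: "lead_coeff (pole_poly0 D) = 1"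
  unfolding pole_poly0_def by (simp add: lead_coeff_prod)

lemma scale_mult_lead_coeff_power_eq:
  fixes D A R :: "complex poly" and a :: complex
  assumes D: "D \<noteq> 0" and R: "lead_coeff R = 1"
    and eq: "\<And>z. z \<notin> poles D \<Longrightarrow> poly A z / poly D z ^ Suc n
          = a * poly R z / (poly (pole_poly D) z * poly (pole_poly0 D) z ^ n)"
  shows "a * lead_coeff D ^ Suc n = lead_coeff A"
proof -
  have "infinite (UNIV - poles D)"
    using poly_roots_finite[OF D] infinite_UNIV_char_0 by (simp add: poles_def)
  then have "smult a R * D ^ Suc n = A * pole_poly D * pole_poly0 D ^ n"
  proof (rule poly_eq_on_infinite)
    fix z assume "z \<in> UNIV - poles D"
    with eq[of z] poly_pole_poly_nonzero[of z D] poly_pole_poly0_nonzero[of z D]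
    show "poly (smult a R * D ^ Suc n) z = poly (A * pole_poly D * pole_poly0 D ^ n) z"
      by (simp add: poles_def field_simps)
  qed
  then have "lead_coeff (smult a R * D ^ Suc n) = lead_coeff (A * pole_poly D * pole_poly0 D ^ n)"
    by simp
  then show ?thesis
    by (simp only: lead_coeff_mult lead_coeff_power lead_coeff_smult lead_coeff_pole_poly
        lead_coeff_pole_poly0 R) simp
qed

lemma scale_eventually_zero_or_pochhammer:
  fixes N D :: "'a::real_normed_field poly" and \<alpha> :: "nat \<Rightarrow> 'a"
  assumes d: "degree D \<ge> 1"
    and \<alpha>: "\<And>n. n \<ge> 1 \<Longrightarrow> \<alpha> n * lead_coeff D ^ Suc n = lead_coeff (deriv_numerator N D n)"
  obtains (vanishing) n0 where "\<And>n. n \<ge> n0 \<Longrightarrow> \<alpha> n = 0"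
    | (rising) n0 m K where "m \<ge> 1" "K > 0" "\<And>j. norm (\<alpha> (j + n0)) = K * real (pochhammer m j)"
proof -
  let ?A = "deriv_numerator N D"
  define n0 where "n0 = degree N + 1"
  have lD: "lead_coeff D \<noteq> 0" using d by auto
  have "degree (?A n0) < Suc n0 * degree D"
    using degree_deriv_numerator_le[OF d, of N n0] d unfolding n0_def by (simp add: algebra_simps)
  then obtain m where m: "degree (?A n0) + m = Suc n0 * degree D" "m \<ge> 1"
    by (intro that[of "Suc n0 * degree D - degree (?A n0)"]) auto
  show thesis
  proof (cases "?A n0 = 0")
    case True
    then have zero: "?A (n0 + k) = 0" for k
      by (induction k) simp_all
    have "\<alpha> n = 0" if "n \<ge> n0" for n
      using \<alpha>[of n] lD that zero[of "n - n0"] unfolding n0_def by simp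
    then show thesis by (rule vanishing)
  next
    case False
    define K where "K = norm (lead_coeff (?A n0)) / norm (lead_coeff D) ^ Suc n0"
    have "norm (\<alpha> (j + n0)) = K * real (pochhammer m j)" for j
    proof -
      have E: "\<alpha> (j + n0) * lead_coeff D ^ (j + Suc n0)
          = (-1) ^ j * of_nat (pochhammer m j) * lead_coeff (?A n0) * lead_coeff D ^ j"
        using \<alpha>[of "j + n0"] deriv_numerator_tail[OF d False m, of j] unfolding n0_def
        by (simp add: add.commute)
      have "norm (\<alpha> (j + n0)) * norm (lead_coeff D) ^ (j + Suc n0)
          = real (pochhammer m j) * norm (lead_coeff (?A n0)) * norm (lead_coeff D) ^ j"
        using arg_cong[OF E, of norm]
        by (simp only: norm_mult norm_power norm_of_nat norm_minus_cancel norm_one power_one mult_1_left)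
      then show ?thesis
        using lD unfolding K_def power_add by (simp add: field_simps)
    qed
    moreover have "K > 0"
      using False lD unfolding K_def by simp
    ultimately show thesis
      using m(2) rising by blast
  qed
qed

subsection \<open>Factorials against rising factorials\<close>

lemma fact_add_le_power_mult_fact: "fact (j + a) \<le> (j + a) ^ a * (fact j :: nat)"
proof -
  have "fact (j + a) = fact (j + a) div fact j * (fact j :: nat)"
    by (simp add: fact_dvd)
  also have "\<dots> \<le> (j + a) ^ a * fact j"
    using fact_div_fact_le_pow[of a "j + a"] by simp
  finally show ?thesis .
qed

lemma pochhammer_le_fact_add: "pochhammer m j \<le> (fact (j + m) :: nat)"
proof (induction j)
  case (Suc j)
  have "pochhammer m (Suc j) = (m + j) * pochhammer m j" by (simp add: pochhammer_Suc)
  also have "\<dots> \<le> Suc (j + m) * fact (j + m)" using Suc.IH by (intro mult_mono) auto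
  finally show ?case by simp
qed simp

lemma fact_le_pochhammer: "m \<ge> 1 \<Longrightarrow> fact j \<le> (pochhammer m j :: nat)"
proof (induction j)
  case (Suc j)
  have "fact (Suc j) = Suc j * fact j" by simp
  also have "\<dots> \<le> (m + j) * pochhammer m j" using Suc by (intro mult_mono) auto
  finally show ?case by (simp add: pochhammer_Suc mult.commute)
qed simp

lemma ln_fact_add_le: "ln (fact (j + a)) \<le> real a * ln (real (j + a)) + ln (fact j)"
proof (cases "j + a = 0")
  case False
  have "(fact (j + a) :: real) \<le> real ((j + a) ^ a * fact j)"
    using fact_add_le_power_mult_fact[of j a] by (metis of_nat_fact of_nat_le_iff)
  then have "ln (fact (j + a)) \<le> ln (real ((j + a) ^ a * fact j))"
    by (rule ln_mono) simp
  also have "\<dots> = real a * ln (real (j + a)) + ln (fact j)"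
    using False by (simp add: ln_mult ln_realpow)
  finally show ?thesis .
qed simp

lemma ln_fact_div_pochhammer_bounds:
  assumes "m \<ge> 1"
  shows "- real m * ln (real (j + m)) \<le> ln (fact (j + n) / real (pochhammer m j))"
    and "ln (fact (j + n) / real (pochhammer m j)) \<le> real n * ln (real (j + n))"
proof -
  have P_pos: "pochhammer m j > 0"
    using pochhammer_pos[of m j] assms by simp
  have "(fact j :: real) \<le> real (pochhammer m j)"
    using fact_le_pochhammer[OF assms, of j] by (metis of_nat_fact of_nat_le_iff)
  then have P_lower: "ln (fact j) \<le> ln (real (pochhammer m j))"
    by (rule ln_mono) simp
  have "real (pochhammer m j) \<le> fact (j + m)"
    using pochhammer_le_fact_add[of m j] by (metis of_nat_fact of_nat_le_iff)
  with P_pos have "ln (real (pochhammer m j)) \<le> ln (fact (j + m))"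
    by (intro ln_mono) auto
  moreover have "ln (fact j) \<le> ln (fact (j + n) :: real)"
    by (rule ln_mono) (simp_all add: fact_mono)
  moreover have "ln (fact (j + n) / real (pochhammer m j)) = ln (fact (j + n)) - ln (real (pochhammer m j))"
    using P_pos by (simp add: ln_div)
  ultimately show "- real m * ln (real (j + m)) \<le> ln (fact (j + n) / real (pochhammer m j))"
    and "ln (fact (j + n) / real (pochhammer m j)) \<le> real n * ln (real (j + n))"
    using P_lower ln_fact_add_le[of j m] ln_fact_add_le[of j n] by (linarith, linarith)
qed

lemma ln_fact_div_pochhammer_tendsto:
  fixes K :: real
  assumes "K > 0" and "m \<ge> 1"
  shows "(\<lambda>j. ln (fact (j + n) / (K * real (pochhammer m j))) / real (j + n)) \<longlonglongrightarrow> 0"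
proof (rule tendsto_sandwich)
  have P_pos: "real (pochhammer m j) > 0" for j using assms by (simp add: pochhammer_pos)
  have split: "ln (fact (j + n) / (K * real (pochhammer m j)))
      = ln (fact (j + n) / real (pochhammer m j)) - ln K" for j
    using P_pos[of j] assms(1) by (simp add: ln_div ln_mult)
  show "\<forall>\<^sub>F j in sequentially. (- real m * ln (real (j + m)) - ln K) / real (j + n)
      \<le> ln (fact (j + n) / (K * real (pochhammer m j))) / real (j + n)"
    using ln_fact_div_pochhammer_bounds(1)[OF assms(2)]
    by (intro always_eventually allI divide_right_mono) (simp_all add: split)
  show "\<forall>\<^sub>F j in sequentially. ln (fact (j + n) / (K * real (pochhammer m j))) / real (j + n)
      \<le> (real n * ln (real (j + n)) - ln K) / real (j + n)"
    using ln_fact_div_pochhammer_bounds(2)[OF assms(2)]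
    by (intro always_eventually allI divide_right_mono) (simp_all add: split)
  show "(\<lambda>j. (- real m * ln (real (j + m)) - ln K) / real (j + n)) \<longlonglongrightarrow> 0"
    by real_asymp
  show "(\<lambda>j. (real n * ln (real (j + n)) - ln K) / real (j + n)) \<longlonglongrightarrow> 0"
    by real_asymp
qed

theorem lemma4p3:
  fixes N D :: "complex poly" and \<alpha> :: "nat \<Rightarrow> complex" and R :: "nat \<Rightarrow> complex poly"
  assumes "D \<noteq> 0" and "coprime N D" and "poles D \<noteq> {}"
    and "\<And>n. n \<ge> 1 \<Longrightarrow> lead_coeff (R n) = 1"
    and "\<And>n z. n \<ge> 1 \<Longrightarrow> z \<notin> poles D \<Longrightarrow>
           (deriv ^^ n) (rat_fun N D) z
             = \<alpha> n * poly (R n) z / (poly (pole_poly D) z * poly (pole_poly0 D) z ^ n)"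
  shows "(\<lambda>n. ln (norm (fact n / \<alpha> n)) / real n) \<longlonglongrightarrow> 0"
proof -
  have d: "degree D \<ge> 1"
    using assms(1,3) poly_zero by (fastforce simp: poles_def)
  have scale: "\<alpha> n * lead_coeff D ^ Suc n = lead_coeff (deriv_numerator N D n)" if n: "n \<ge> 1" for n
  proof (rule scale_mult_lead_coeff_power_eq[OF assms(1) assms(4)[OF n]])
    fix z assume "z \<notin> poles D"
    with assms(5)[OF n this] show "poly (deriv_numerator N D n) z / poly D z ^ Suc n
        = \<alpha> n * poly (R n) z / (poly (pole_poly D) z * poly (pole_poly0 D) z ^ n)"
      by (simp add: higher_deriv_rat_fun poles_def)
  qed
  show ?thesis
  proof (rule scale_eventually_zero_or_pochhammer[OF d scale])
    fix n0 assume vanishing: "\<And>n. n \<ge> n0 \<Longrightarrow> \<alpha> n = 0"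
    have "\<forall>\<^sub>F n in sequentially. ln (norm (fact n / \<alpha> n)) / real n = 0"
      using eventually_ge_at_top[of n0] by eventually_elim (simp add: vanishing)
    then show ?thesis
      by (rule tendsto_eventually)
  next
    fix n0 m K
    assume "m \<ge> 1" "K > 0" and rising: "\<And>j. norm (\<alpha> (j + n0)) = K * real (pochhammer m j)"
    have "(\<lambda>j. ln (norm (fact (j + n0) / \<alpha> (j + n0))) / real (j + n0)) \<longlonglongrightarrow> 0"
      using ln_fact_div_pochhammer_tendsto[OF \<open>K > 0\<close> \<open>m \<ge> 1\<close>, of n0]
      by (simp add: norm_divide rising)
    then show ?thesis
      by (rule LIMSEQ_offset)
  qed
qed

end
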